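(* Let $u$ be a positive solution of $\frac{u''}{1+(u')^2}=\frac{xu'}{2}-\frac u2+\frac{n-1}{u}$ on a finite interval $(x_1,x_2)$. If $u'<0$ and $u''>0$ on $(x_1,x_2)$, then $\lim_{x\to x_2}u(x)>0$.
   Context: $n\ge 2$ is a fixed integer. *)

theory Defs
  imports "HOL-Analysis.Analysis"
begin

end

theory Submission
  imports Defs
begin

(*
  Being positive and decreasing, u has a limit L >= 0 at x2; suppose L = 0.
  Near x2 the slope u' lies in [-M, 0] (u' increases), so x u'/2 - u/2 is bounded below and the
  equation gives u'' >= u''/(1 + u'^2) >= k/u - C with k = n - 1 > 0.  As (k/M) u'/u >= -k/u,
  the function G = u' + (k/M) ln u + C x is nondecreasing.  But ln u -> -infinity while u' <= 0
  and C x stays bounded, so G would drop below its initial value.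
*)

lemma DERIV_nonneg_imp_mono_on:
  fixes f :: "real \<Rightarrow> real"
  assumes "is_interval S"
    and "\<And>x. x \<in> S \<Longrightarrow> (f has_real_derivative f' x) (at x)"
    and "\<And>x. x \<in> S \<Longrightarrow> f' x \<ge> 0"
  shows "mono_on S f"
proof (rule mono_onI)
  fix r s assume "r \<in> S" "s \<in> S" "r \<le> s"
  show "f r \<le> f s"
  proof (rule DERIV_nonneg_imp_nondecreasing[OF \<open>r \<le> s\<close>])
    fix x assume "r \<le> x" "x \<le> s"
    then have "x \<in> S" using \<open>is_interval S\<close> \<open>r \<in> S\<close> \<open>s \<in> S\<close> by (meson is_interval_1)
    then show "\<exists>y. (f has_real_derivative y) (at x) \<and> y \<ge> 0" using assms(2,3) by blast
  qed
qed

lemma DERIV_nonpos_imp_antimono_on: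
  fixes f :: "real \<Rightarrow> real"
  assumes "is_interval S"
    and "\<And>x. x \<in> S \<Longrightarrow> (f has_real_derivative f' x) (at x)"
    and "\<And>x. x \<in> S \<Longrightarrow> f' x \<le> 0"
  shows "antimono_on S f"
proof -
  have "mono_on S (\<lambda>x. - f x)"
    using assms by (intro DERIV_nonneg_imp_mono_on[where f' = "\<lambda>x. - f' x"]) (auto intro: DERIV_minus)
  then show ?thesis by (simp add: monotone_on_def)
qed

lemma antimono_on_tendsto_at_left_Inf:
  fixes f :: "'a::linorder_topology \<Rightarrow> 'b::{conditionally_complete_linorder, linorder_topology}"
  assumes "a < b" and anti: "antimono_on {a..<b} f" and bdd: "bdd_below (f ` {a..<b})"
  shows "(f \<longlongrightarrow> Inf (f ` {a..<b})) (at_left b)"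
proof (rule order_tendstoI)
  fix c assume "c < Inf (f ` {a..<b})"
  then have "c < f x" if "x \<in> {a..<b}" for x
    using cInf_lower[OF _ bdd] that by (meson imageI less_le_trans)
  then show "\<forall>\<^sub>F x in at_left b. c < f x"
    using \<open>a < b\<close> by (auto simp: eventually_at_left intro!: exI[of _ a])
next
  fix c assume "Inf (f ` {a..<b}) < c"
  then obtain y where y: "y \<in> {a..<b}" "f y < c"
    using \<open>a < b\<close> by (auto simp: cInf_less_iff[OF _ bdd])
  then have "f x < c" if "x \<in> {a..<b}" "y \<le> x" for x
    using monotone_onD[OF anti y(1) that] by simp
  then show "\<forall>\<^sub>F x in at_left b. f x < c"
    using y(1) by (auto simp: eventually_at_left intro!: exI[of _ y])
qed

lemma antimono_on_nonneg_tendsto_at_left: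
  fixes f :: "real \<Rightarrow> real"
  assumes "a < b" and "antimono_on {a..<b} f" and nonneg: "\<And>x. x \<in> {a..<b} \<Longrightarrow> f x \<ge> 0"
  obtains L where "L \<ge> 0" and "(f \<longlongrightarrow> L) (at_left b)"
proof
  have "bdd_below (f ` {a..<b})"
    using nonneg by (intro bdd_belowI2[of _ 0])
  then show "(f \<longlongrightarrow> Inf (f ` {a..<b})) (at_left b)"
    using assms by (intro antimono_on_tendsto_at_left_Inf)
  show "Inf (f ` {a..<b}) \<ge> 0"
    using \<open>a < b\<close> nonneg by (intro cINF_greatest) auto
qed

lemma deriv2_lower_bound_from_ode:
  fixes x p q v k B M V :: real
  assumes "v > 0" "q > 0" "q / (1 + p\<^sup>2) = x * p / 2 - v / 2 + k / v"
    and "\<bar>x\<bar> \<le> B" "\<bar>p\<bar> \<le> M" "v \<le> V"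
  shows "q \<ge> k / v - (B * M / 2 + V / 2)"
proof -
  have "q / (1 + p\<^sup>2) \<le> q"
    using \<open>q > 0\<close> by (simp add: divide_le_eq add_pos_nonneg)
  moreover have "\<bar>x * p\<bar> \<le> B * M"
    using assms(4,5) by (simp add: abs_mult mult_mono')
  ultimately show ?thesis
    using assms(3,6) by (simp add: field_simps)
qed

lemma not_tendsto_zero_at_left_of_deriv2_ge_inverse:
  fixes u u' u'' :: "real \<Rightarrow> real" and a b k M C :: real
  assumes "a < b" and "k > 0" and "M > 0"
    and d1: "\<And>x. x \<in> {a..<b} \<Longrightarrow> (u has_real_derivative u' x) (at x)"
    and d2: "\<And>x. x \<in> {a..<b} \<Longrightarrow> (u' has_real_derivative u'' x) (at x)"
    and pos: "\<And>x. x \<in> {a..<b} \<Longrightarrow> u x > 0"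
    and slope: "\<And>x. x \<in> {a..<b} \<Longrightarrow> - M \<le> u' x \<and> u' x \<le> 0"
    and forcing: "\<And>x. x \<in> {a..<b} \<Longrightarrow> u'' x \<ge> k / u x - C"
  shows "\<not> (u \<longlongrightarrow> 0) (at_left b)"
proof
  assume u0: "(u \<longlongrightarrow> 0) (at_left b)"
  define G where "G x = u' x + k / M * ln (u x) + C * x" for x
  define B where "B = max \<bar>a\<bar> \<bar>b\<bar>"
  have "mono_on {a..<b} G"
  proof (rule DERIV_nonneg_imp_mono_on)
    fix x assume x: "x \<in> {a..<b}"
    show "(G has_real_derivative u'' x + k / M * (u' x / u x) + C) (at x)"
      unfolding G_def using d1[OF x] d2[OF x] pos[OF x] \<open>M > 0\<close>
      by (auto intro!: derivative_eq_intros simp: field_simps)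
    have "u' x / M \<ge> -1"
      using slope[OF x] \<open>M > 0\<close> by (simp add: field_simps)
    then have "k / u x * (u' x / M) \<ge> k / u x * (-1)"
      using pos[OF x] \<open>k > 0\<close> by (intro mult_left_mono) auto
    then have "k / M * (u' x / u x) \<ge> - (k / u x)"
      by (simp add: field_simps)
    then show "u'' x + k / M * (u' x / u x) + C \<ge> 0"
      using forcing[OF x] by linarith
  qed simp
  then have G_lower: "G a \<le> G x" if "x \<in> {a..<b}" for x
    using that \<open>a < b\<close> by (auto intro: mono_onD)
  have G_upper: "G x \<le> k / M * ln (u x) + \<bar>C\<bar> * B" if "x \<in> {a..<b}" for x
  proof -
    have "\<bar>x\<bar> \<le> B" using that by (auto simp: B_def)
    then have "\<bar>C\<bar> * \<bar>x\<bar> \<le> \<bar>C\<bar> * B" by (simp add: mult_left_mono)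
    then have "C * x \<le> \<bar>C\<bar> * B" by (metis abs_ge_self abs_mult order_trans)
    then show ?thesis using slope[OF that] by (simp add: G_def)
  qed
  define \<epsilon> where "\<epsilon> = exp ((G a - \<bar>C\<bar> * B) * M / k)"
  have u_lower: "u x \<ge> \<epsilon>" if "x \<in> {a..<b}" for x
  proof -
    have "k / M * ln (u x) \<ge> G a - \<bar>C\<bar> * B"
      using G_lower[OF that] G_upper[OF that] by linarith
    then have "ln (u x) \<ge> (G a - \<bar>C\<bar> * B) * M / k"
      using \<open>k > 0\<close> \<open>M > 0\<close> by (simp add: field_simps)
    then show ?thesis
      unfolding \<epsilon>_def using pos[OF that] by (metis exp_le_cancel_iff exp_ln)
  qed
  have "\<forall>\<^sub>F x in at_left b. x \<in> {a<..<b}"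
    using eventually_at_left_real[OF \<open>a < b\<close>] .
  moreover have "\<forall>\<^sub>F x in at_left b. u x < \<epsilon>"
    using order_tendstoD(2)[OF u0] by (simp add: \<epsilon>_def)
  ultimately have "\<forall>\<^sub>F x in at_left b. False"
    by eventually_elim (use u_lower in \<open>fastforce simp: not_le[symmetric]\<close>)
  then show False by simp
qed

theorem lemma2p4:
  fixes n :: nat and u u' u'' :: "real \<Rightarrow> real" and x\<^sub>1 x\<^sub>2 :: real
  assumes n: "n \<ge> 2"
    and interval: "x\<^sub>1 < x\<^sub>2"
    and d1: "\<And>x. x \<in> {x\<^sub>1<..<x\<^sub>2} \<Longrightarrow> (u has_real_derivative u' x) (at x)"
    and d2: "\<And>x. x \<in> {x\<^sub>1<..<x\<^sub>2} \<Longrightarrow> (u' has_real_derivative u'' x) (at x)"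
    and pos: "\<And>x. x \<in> {x\<^sub>1<..<x\<^sub>2} \<Longrightarrow> u x > 0"
    and ode: "\<And>x. x \<in> {x\<^sub>1<..<x\<^sub>2} \<Longrightarrow>
               u'' x / (1 + (u' x)\<^sup>2) = x * u' x / 2 - u x / 2 + (real n - 1) / u x"
    and dec: "\<And>x. x \<in> {x\<^sub>1<..<x\<^sub>2} \<Longrightarrow> u' x < 0"
    and convex: "\<And>x. x \<in> {x\<^sub>1<..<x\<^sub>2} \<Longrightarrow> u'' x > 0"
  shows "\<exists>L. (u \<longlongrightarrow> L) (at_left x\<^sub>2) \<and> L > 0"
proof -
  define x\<^sub>0 where "x\<^sub>0 = (x\<^sub>1 + x\<^sub>2) / 2"
  have "x\<^sub>1 < x\<^sub>0" "x\<^sub>0 < x\<^sub>2" using interval by (simp_all add: x\<^sub>0_def)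
  then have tail: "{x\<^sub>0..<x\<^sub>2} \<subseteq> {x\<^sub>1<..<x\<^sub>2}" by auto
  have u_anti: "antimono_on {x\<^sub>1<..<x\<^sub>2} u"
    using d1 dec by (intro DERIV_nonpos_imp_antimono_on) (auto intro: less_imp_le)
  have u'_mono: "mono_on {x\<^sub>1<..<x\<^sub>2} u'"
    using d2 convex by (intro DERIV_nonneg_imp_mono_on) (auto intro: less_imp_le)
  have "u x \<ge> 0" if "x \<in> {x\<^sub>0..<x\<^sub>2}" for x
    using pos tail that by (meson less_imp_le subsetD)
  then obtain L where "L \<ge> 0" and lim: "(u \<longlongrightarrow> L) (at_left x\<^sub>2)"
    using antimono_on_nonneg_tendsto_at_left[OF \<open>x\<^sub>0 < x\<^sub>2\<close> monotone_on_subset[OF u_anti tail]]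
    by blast
  moreover have "L \<noteq> 0"
  proof
    define M where "M = - u' x\<^sub>0"
    define B where "B = max \<bar>x\<^sub>0\<bar> \<bar>x\<^sub>2\<bar>"
    have "\<not> (u \<longlongrightarrow> 0) (at_left x\<^sub>2)"
    proof (rule not_tendsto_zero_at_left_of_deriv2_ge_inverse
        [where k = "real n - 1" and M = M and C = "B * M / 2 + u x\<^sub>0 / 2"])
      fix x assume x: "x \<in> {x\<^sub>0..<x\<^sub>2}"
      then have x': "x \<in> {x\<^sub>1<..<x\<^sub>2}" using tail by blast
      have "- M \<le> u' x"
        using monotone_onD[OF u'_mono _ x'] x \<open>x\<^sub>1 < x\<^sub>0\<close> by (simp add: M_def)
      then show slope: "- M \<le> u' x \<and> u' x \<le> 0" using dec[OF x'] by simp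
      have "u x \<le> u x\<^sub>0"
        using monotone_onD[OF u_anti _ x'] x \<open>x\<^sub>1 < x\<^sub>0\<close> by simp
      moreover have "\<bar>x\<bar> \<le> B" using x by (auto simp: B_def)
      moreover have "\<bar>u' x\<bar> \<le> M" using slope by simp
      ultimately show "u'' x \<ge> (real n - 1) / u x - (B * M / 2 + u x\<^sub>0 / 2)"
        using pos[OF x'] convex[OF x'] ode[OF x'] by (intro deriv2_lower_bound_from_ode) auto
    qed (use d1 d2 pos dec tail n \<open>x\<^sub>0 < x\<^sub>2\<close> \<open>x\<^sub>1 < x\<^sub>0\<close> in \<open>auto simp: M_def\<close>)
    moreover assume "L = 0"
    ultimately show False using lim by simp
  qed
  ultimately show ?thesis using lim by auto
qed

end
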